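(* Let $p>1$, let $k\ge 2$ be an integer and define \[\psi_k(x)=\sin^p(\pi x)\Big(\frac1{(k-x)^p}+\frac1{(k+x-1)^p}\Big),\qquad x\in[1/2,1].\] If $x\in(1/2,1)$ and $\psi_k'(x)<0$, then $\psi_{k+1}'(x)<0$. *)

theory Defs
  imports "HOL-Analysis.Analysis"
begin

definition psi :: "real \<Rightarrow> nat \<Rightarrow> real \<Rightarrow> real" where
  "psi p k x = (sin (pi * x)) powr p *
      (1 / (real k - x) powr p + 1 / (real k + x - 1) powr p)"

end

theory Submission
  imports Defs
begin

text \<open>With a = k - x and b = k + x - 1, the derivative of psi_k at x is
  p sin(pi x)^(p-1) (pi cos(pi x) (a^(-p) + b^(-p)) + sin(pi x) (a^(-p-1) - b^(-p-1))),
  so it is negative iff sin(pi x) R(a,b) < -pi cos(pi x), where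
  R(a,b) = (a^(-p-1) - b^(-p-1)) / (a^(-p) + b^(-p)). Replacing k by k + 1 shifts a and b
  by one, and the shift decreases R when 0 < a < b, i.e. when x > 1/2: by homogeneity
  R(a,b) = R(1,b/a) / a, where R(1,-) is positive and increasing on (1,oo), while both
  1/a and b/a decrease under the shift.\<close>

definition edge_ratio :: "real \<Rightarrow> real \<Rightarrow> real \<Rightarrow> real" where
  "edge_ratio p a b = (a powr (-p-1) - b powr (-p-1)) / (a powr -p + b powr -p)"

lemma edge_ratio_homogeneous:
  assumes "0 < a" "0 < b"
  shows "edge_ratio p a b = edge_ratio p 1 (b/a) / a"
proof -
  have b: "b powr q = a powr q * (b/a) powr q" for q
    using powr_mult[of a "b/a" q] assms by simp
  have a: "a powr (-p-1) = a powr -p / a"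
    using assms by (simp add: powr_diff)
  have cancel: "(A/a - A * X / a) / (A + A * Y) = (1 - X) / (1 + Y) / a"
    if "0 < A" "0 < Y" for A X Y :: real
  proof -
    have "(A/a - A * X / a) / (A + A * Y) = (A * ((1 - X) / a)) / (A * (1 + Y))"
      by (simp add: algebra_simps diff_divide_distrib)
    also have "\<dots> = (1 - X) / (1 + Y) / a"
      using that by simp
    finally show ?thesis .
  qed
  show ?thesis
    unfolding edge_ratio_def b a using assms by (simp add: cancel)
qed

lemma edge_ratio_one_pos:
  assumes "0 < p" "1 < t"
  shows "0 < edge_ratio p 1 t"
proof -
  have "t powr (-p-1) < 1"
    using powr_less_mono2_neg[of "-p-1" 1 t] assms by simp
  then show ?thesis
    unfolding edge_ratio_def using assms by (simp add: add_pos_pos)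
qed

lemma edge_ratio_one_strict_mono:
  assumes "0 < p" "1 < s" "s < t"
  shows "edge_ratio p 1 s < edge_ratio p 1 t"
proof -
  have num: "0 < 1 - s powr (-p-1)" "1 - s powr (-p-1) < 1 - t powr (-p-1)"
    using powr_less_mono2_neg[of "-p-1" 1 s] powr_less_mono2_neg[of "-p-1" s t] assms
    by auto
  have den: "0 < 1 + t powr -p" "1 + t powr -p < 1 + s powr -p"
    using powr_less_mono2_neg[of "-p" s t] assms by (auto simp: add_pos_pos)
  have "(1 - s powr (-p-1)) / (1 + s powr -p) < (1 - t powr (-p-1)) / (1 + s powr -p)"
    using num den by (intro divide_strict_right_mono) auto
  also have "\<dots> < (1 - t powr (-p-1)) / (1 + t powr -p)"
    using num den by (intro divide_strict_left_mono) auto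
  finally show ?thesis unfolding edge_ratio_def by simp
qed

lemma edge_ratio_shift_less:
  assumes "0 < p" "0 < a" "a < b"
  shows "edge_ratio p (a+1) (b+1) < edge_ratio p a b"
proof -
  have t: "1 < (b+1)/(a+1)" "(b+1)/(a+1) < b/a"
    using assms by (auto simp: field_simps)
  have pos: "0 < edge_ratio p 1 ((b+1)/(a+1))"
    using edge_ratio_one_pos[OF assms(1) t(1)] .
  have "edge_ratio p (a+1) (b+1) = edge_ratio p 1 ((b+1)/(a+1)) / (a+1)"
    using assms by (intro edge_ratio_homogeneous) auto
  also have "\<dots> < edge_ratio p 1 ((b+1)/(a+1)) / a"
    using pos assms by (intro divide_strict_left_mono) auto
  also have "\<dots> < edge_ratio p 1 (b/a) / a"
    using edge_ratio_one_strict_mono[OF assms(1) t] assms by (intro divide_strict_right_mono) auto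
  also have "\<dots> = edge_ratio p a b"
    using assms by (intro edge_ratio_homogeneous[symmetric]) auto
  finally show ?thesis .
qed

lemma has_real_derivative_psi:
  assumes "0 < x" "x < 1" "1 \<le> k"
  shows "(psi p k has_real_derivative p * sin (pi*x) powr (p-1) *
      (pi * cos (pi*x) * ((real k - x) powr -p + (real k + x - 1) powr -p)
       + sin (pi*x) * ((real k - x) powr (-p-1) - (real k + x - 1) powr (-p-1)))) (at x)"
proof -
  have s: "sin (pi*x) > 0" using assms by (intro sin_gt_zero) auto
  have a: "real k - x > 0" "real k + x - 1 > 0" using assms by auto
  have psi_eq: "psi p k = (\<lambda>x. sin (pi*x) powr p *
      ((real k - x) powr -p + (real k + x - 1) powr -p))"
    by (rule ext) (simp add: psi_def powr_minus_divide)
  have sin_powr: "sin (pi*x) powr p = sin (pi*x) * sin (pi*x) powr (p-1)"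
    using s by (simp add: powr_mult_base)
  have d_sin: "((\<lambda>x. sin (pi*x)) has_real_derivative cos (pi*x) * pi) (at x)"
    by (auto intro!: derivative_eq_intros)
  have d_a: "((\<lambda>x. real k - x) has_real_derivative -1) (at x)"
    by (auto intro!: derivative_eq_intros)
  have d_b: "((\<lambda>x. real k + x - 1) has_real_derivative 1) (at x)"
    by (auto intro!: derivative_eq_intros)
  show ?thesis
    unfolding psi_eq
    using DERIV_mult[OF DERIV_fun_powr[OF d_sin s, of p]
        DERIV_add[OF DERIV_fun_powr[OF d_a a(1), of "-p"] DERIV_fun_powr[OF d_b a(2), of "-p"]]]
    by (simp add: sin_powr algebra_simps)
qed

lemma deriv_psi_neg_iff:
  assumes "0 < p" "0 < x" "x < 1" "1 \<le> k"
  shows "deriv (psi p k) x < 0 \<longleftrightarrow>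
    sin (pi*x) * edge_ratio p (real k - x) (real k + x - 1) < - pi * cos (pi*x)"
proof -
  define a b where "a = real k - x" and "b = real k + x - 1"
  have factor_pos: "0 < p * sin (pi*x) powr (p-1)"
    using assms sin_gt_zero[of "pi*x"] by simp
  have sum_pos: "0 < a powr -p + b powr -p"
    using assms unfolding a_def b_def by (simp add: add_pos_pos)
  have "deriv (psi p k) x < 0 \<longleftrightarrow>
      pi * cos (pi*x) * (a powr -p + b powr -p) + sin (pi*x) * (a powr (-p-1) - b powr (-p-1)) < 0"
    unfolding DERIV_imp_deriv[OF has_real_derivative_psi[OF assms(2-4)]] a_def b_def
    using factor_pos by (metis mult_less_cancel_left_pos mult_zero_right)
  also have "\<dots> \<longleftrightarrow> sin (pi*x) * edge_ratio p a b < - pi * cos (pi*x)"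
    using sum_pos unfolding edge_ratio_def by (simp add: field_simps)
  finally show ?thesis unfolding a_def b_def .
qed

theorem lemma2:
  fixes p x :: real and k :: nat
  assumes "p > 1" and "k \<ge> 2"
    and "1/2 < x" and "x < 1"
    and "deriv (psi p k) x < 0"
  shows "deriv (psi p (k + 1)) x < 0"
proof -
  have "0 < sin (pi*x)" using assms by (intro sin_gt_zero) auto
  moreover have "edge_ratio p (real k - x + 1) (real k + x - 1 + 1)
      < edge_ratio p (real k - x) (real k + x - 1)"
    using assms by (intro edge_ratio_shift_less) auto
  ultimately have "sin (pi*x) * edge_ratio p (real (k+1) - x) (real (k+1) + x - 1)
      < sin (pi*x) * edge_ratio p (real k - x) (real k + x - 1)"
    by (simp add: algebra_simps)
  also have "\<dots> < - pi * cos (pi*x)"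
    using assms deriv_psi_neg_iff[of p x k] by simp
  finally show ?thesis
    using assms deriv_psi_neg_iff[of p x "k+1"] by simp
qed

end
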